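(* Let $\theta_{12},\gamma_{12},\theta_{23},\gamma_{23}\in(0,1)$ and for $(i,j)\in\{(1,2),(2,3)\}$ let $g_{\{i,j\}}(x_i,x_j)=\frac{x_i}{\theta_{ij}}+\frac{x_j}{\gamma_{ij}}+\Big(1-\frac{1}{\theta_{ij}}-\frac{1}{\gamma_{ij}}\Big)\min(x_i,x_j)$ for $x_i,x_j\ge0$. Let $g(x_1,x_2,x_3)=g_{\{1,2\}}(x_1,x_2)+g_{\{2,3\}}(x_2,x_3)-x_2$ and $g_{\{1,3\}}(x_1,x_3):=\min_{x_2\ge0}g(x_1,x_2,x_3)$. Then for all $x_1,x_3\ge0$, $$g_{\{1,3\}}(x_1,x_3)=\frac{x_1}{\max(\theta_{12},\theta_{23})}+\frac{x_3}{\max(\gamma_{12},\gamma_{23})}+\Big(1-\frac{1}{\max(\theta_{12},\theta_{23})}-\frac{1}{\max(\gamma_{12},\gamma_{23})}\Big)\min(x_1,x_3).$$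
   Context: This is the chain geometric extremal graphical model on vertices $\{1,2,3\}$ with edges $\{1,2\},\{2,3\}$ in standard exponential margins; $g_{\{1,3\}}$ is its bivariate marginal gauge. *)

theory Defs
  imports Complex_Main
begin

definition gpair :: "real \<Rightarrow> real \<Rightarrow> real \<Rightarrow> real \<Rightarrow> real" where
  "gpair \<theta> \<gamma> xi xj = xi / \<theta> + xj / \<gamma> + (1 - 1/\<theta> - 1/\<gamma>) * min xi xj"

definition gchain :: "real \<Rightarrow> real \<Rightarrow> real \<Rightarrow> real \<Rightarrow> real \<Rightarrow> real \<Rightarrow> real \<Rightarrow> real" where
  "gchain \<theta>12 \<gamma>12 \<theta>23 \<gamma>23 x1 x2 x3 =
     gpair \<theta>12 \<gamma>12 x1 x2 + gpair \<theta>23 \<gamma>23 x2 x3 - x2"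

end

theory Submission
  imports Defs
begin

text \<open>
  The pair gauge is \<open>min u v + (u - v)\<^sup>+ / \<theta> + (v - u)\<^sup>+ / \<gamma>\<close>, so it is the identity on the
  diagonal and antitone in its parameters. Hence the chain gauge at \<open>x2 = x1\<close> and at \<open>x2 = x3\<close>
  is the pair gauge of one edge at \<open>(x1, x3)\<close>, and the smaller of the two is the pair gauge with
  the maximal parameters. For the lower bound, a pair gauge with parameters in \<open>(0, 1]\<close> is the
  maximum of the one-sided gauges \<open>v + (u - v)\<^sup>+ / \<theta>\<close> and \<open>u + (v - u)\<^sup>+ / \<gamma>\<close>, each of which
  satisfies \<open>g(x1, x3) \<le> g(x1, x2) + g(x2, x3) - x2\<close> by subadditivity of the positive part.
\<close>

lemma gpair_eq_pos_part:
  "gpair \<theta> \<gamma> u v = min u v + max (u - v) 0 / \<theta> + max (v - u) 0 / \<gamma>"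
  by (cases "u \<le> v") (simp_all add: gpair_def min_def max_def field_simps diff_divide_distrib)

lemma gpair_diag: "gpair \<theta> \<gamma> u u = u"
  by (simp add: gpair_eq_pos_part)

lemma gpair_swap: "gpair \<theta> \<gamma> u v = gpair \<gamma> \<theta> v u"
  by (simp add: gpair_def min.commute add_ac diff_diff_eq2)

lemma divide_max_eq_min_divide:
  fixes d :: real
  assumes "d \<ge> 0" "\<theta> > 0" "\<theta>' > 0"
  shows "d / max \<theta> \<theta>' = min (d / \<theta>) (d / \<theta>')"
  using assms divide_left_mono[of \<theta> \<theta>' d] divide_left_mono[of \<theta>' \<theta> d]
  by (cases "\<theta> \<le> \<theta>'") (simp_all add: max_def min_def)

lemma gpair_max_params:
  assumes "\<theta> > 0" "\<theta>' > 0" "\<gamma> > 0" "\<gamma>' > 0"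
  shows "gpair (max \<theta> \<theta>') (max \<gamma> \<gamma>') u v = min (gpair \<theta> \<gamma> u v) (gpair \<theta>' \<gamma>' u v)"
  using assms divide_max_eq_min_divide[of "max (u - v) 0" \<theta> \<theta>']
    divide_max_eq_min_divide[of "max (v - u) 0" \<gamma> \<gamma>']
  by (cases "v \<le> u") (simp_all add: gpair_eq_pos_part min_add_distrib_left max_def)

lemma gpair_antimono:
  assumes "0 < \<theta>" "\<theta> \<le> \<theta>'" "0 < \<gamma>" "\<gamma> \<le> \<gamma>'"
  shows "gpair \<theta>' \<gamma>' u v \<le> gpair \<theta> \<gamma> u v"
  using gpair_max_params[of \<theta> \<theta>' \<gamma> \<gamma>' u v] assms by (simp add: max_absorb2)

lemma gpair_eq_max_one_sided:
  assumes "0 < \<theta>" "\<theta> \<le> 1" "0 < \<gamma>" "\<gamma> \<le> 1"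
  shows "gpair \<theta> \<gamma> u v = max (gpair \<theta> 1 u v) (gpair 1 \<gamma> u v)"
  using gpair_antimono[of \<theta> \<theta> \<gamma> 1 u v] gpair_antimono[of \<theta> 1 \<gamma> \<gamma> u v] assms
  by (cases "v \<le> u") (simp_all add: gpair_eq_pos_part max_def)

lemma gpair_right_one_triangle:
  assumes "\<theta> > 0"
  shows "gpair \<theta> 1 x1 x3 \<le> gpair \<theta> 1 x1 x2 + gpair \<theta> 1 x2 x3 - x2"
proof -
  have "max (x1 - x3) 0 \<le> max (x1 - x2) 0 + max (x2 - x3) 0"
    by simp
  then have "max (x1 - x3) 0 / \<theta> \<le> max (x1 - x2) 0 / \<theta> + max (x2 - x3) 0 / \<theta>"
    using assms by (simp add: add_divide_distrib [symmetric] divide_right_mono)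
  moreover have "gpair \<theta> 1 u v = v + max (u - v) 0 / \<theta>" for u v
    by (simp add: gpair_eq_pos_part min_def max_def)
  ultimately show ?thesis
    by simp
qed

lemma gpair_left_one_triangle:
  assumes "\<gamma> > 0"
  shows "gpair 1 \<gamma> x1 x3 \<le> gpair 1 \<gamma> x1 x2 + gpair 1 \<gamma> x2 x3 - x2"
  using gpair_right_one_triangle[OF assms, of x3 x1 x2]
  by (simp add: gpair_swap[of 1])

lemma gpair_triangle:
  assumes "0 < \<theta>" "\<theta> \<le> 1" "0 < \<gamma>" "\<gamma> \<le> 1"
  shows "gpair \<theta> \<gamma> x1 x3 \<le> gpair \<theta> \<gamma> x1 x2 + gpair \<theta> \<gamma> x2 x3 - x2"
proof -
  have "gpair \<theta> 1 x1 x3 \<le> gpair \<theta> 1 x1 x2 + gpair \<theta> 1 x2 x3 - x2"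
    using assms(1) by (rule gpair_right_one_triangle)
  also have "\<dots> \<le> gpair \<theta> \<gamma> x1 x2 + gpair \<theta> \<gamma> x2 x3 - x2"
    using gpair_eq_max_one_sided[OF assms] by simp
  finally have right: "gpair \<theta> 1 x1 x3 \<le> gpair \<theta> \<gamma> x1 x2 + gpair \<theta> \<gamma> x2 x3 - x2" .
  have "gpair 1 \<gamma> x1 x3 \<le> gpair 1 \<gamma> x1 x2 + gpair 1 \<gamma> x2 x3 - x2"
    using assms(3) by (rule gpair_left_one_triangle)
  also have "\<dots> \<le> gpair \<theta> \<gamma> x1 x2 + gpair \<theta> \<gamma> x2 x3 - x2"
    using gpair_eq_max_one_sided[OF assms] by simp
  finally show ?thesis
    using right gpair_eq_max_one_sided[OF assms] by simp
qed

theorem lemma1: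
  fixes \<theta>12 \<gamma>12 \<theta>23 \<gamma>23 x1 x3 :: real
  assumes "\<theta>12 \<in> {0<..<1}" "\<gamma>12 \<in> {0<..<1}" "\<theta>23 \<in> {0<..<1}" "\<gamma>23 \<in> {0<..<1}"
    and "x1 \<ge> 0" "x3 \<ge> 0"
  shows "(\<exists>x2\<ge>0. gchain \<theta>12 \<gamma>12 \<theta>23 \<gamma>23 x1 x2 x3
                  = gpair (max \<theta>12 \<theta>23) (max \<gamma>12 \<gamma>23) x1 x3) \<and>
         (\<forall>x2\<ge>0. gpair (max \<theta>12 \<theta>23) (max \<gamma>12 \<gamma>23) x1 x3
                  \<le> gchain \<theta>12 \<gamma>12 \<theta>23 \<gamma>23 x1 x2 x3)"
proof
  let ?\<theta> = "max \<theta>12 \<theta>23" and ?\<gamma> = "max \<gamma>12 \<gamma>23"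
  have params: "0 < \<theta>12" "0 < \<gamma>12" "0 < \<theta>23" "0 < \<gamma>23" "?\<theta> \<le> 1" "?\<gamma> \<le> 1"
    using assms(1-4) by auto
  have "gchain \<theta>12 \<gamma>12 \<theta>23 \<gamma>23 x1 x1 x3 = gpair \<theta>23 \<gamma>23 x1 x3"
    and "gchain \<theta>12 \<gamma>12 \<theta>23 \<gamma>23 x1 x3 x3 = gpair \<theta>12 \<gamma>12 x1 x3"
    by (simp_all add: gchain_def gpair_diag)
  moreover have "gpair ?\<theta> ?\<gamma> x1 x3 = min (gpair \<theta>12 \<gamma>12 x1 x3) (gpair \<theta>23 \<gamma>23 x1 x3)"
    using params by (simp add: gpair_max_params)
  ultimately show "\<exists>x2\<ge>0. gchain \<theta>12 \<gamma>12 \<theta>23 \<gamma>23 x1 x2 x3 = gpair ?\<theta> ?\<gamma> x1 x3"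
    using assms(5,6) by (metis min_def)
  show "\<forall>x2\<ge>0. gpair ?\<theta> ?\<gamma> x1 x3 \<le> gchain \<theta>12 \<gamma>12 \<theta>23 \<gamma>23 x1 x2 x3"
  proof (intro allI impI)
    fix x2 :: real
    have "gpair ?\<theta> ?\<gamma> x1 x3 \<le> gpair ?\<theta> ?\<gamma> x1 x2 + gpair ?\<theta> ?\<gamma> x2 x3 - x2"
      using params by (intro gpair_triangle) auto
    also have "\<dots> \<le> gchain \<theta>12 \<gamma>12 \<theta>23 \<gamma>23 x1 x2 x3"
      using params gpair_antimono[of \<theta>12 ?\<theta> \<gamma>12 ?\<gamma>] gpair_antimono[of \<theta>23 ?\<theta> \<gamma>23 ?\<gamma>]
      by (simp add: gchain_def add_mono)
    finally show "gpair ?\<theta> ?\<gamma> x1 x3 \<le> gchain \<theta>12 \<gamma>12 \<theta>23 \<gamma>23 x1 x2 x3" .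
  qed
qed

end
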